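(* For every positive integer $n$, every proper arc-colouring of type I of the complete symmetric digraph $\overleftrightarrow{K_n}$ is distinguishing. Consequently, $$\chi'_{D_{1,2}}(\overleftrightarrow{K_n}) = \chi'_{1,2}(\overleftrightarrow{K_n}) = \min\left\{k : n \leq \binom{k}{\lfloor k/2\rfloor}\right\}.$$
   Context: For a simple graph $G$, the symmetric digraph $\overleftrightarrow{G}$ is obtained by replacing each edge $uv$ of $G$ by the pair of opposite arcs $\overrightarrow{uv}$ and $\overrightarrow{vu}$. An arc-colouring of $\overleftrightarrow{G}$ is proper of type I if any two consecutive arcs $\overrightarrow{uv},\overrightarrow{vw}$ (including the case $w=u$) receive distinct colours, i.e. there are no monochromatic 2-cycles and no monochromatic 2-paths. An arc-colouring is distinguishing if the only automorphism of $\overleftrightarrow{G}$ preserving the colour of every arc is the identity. $\chi'_{1,2}(\overleftrightarrow{G})$ is the least number of colours in a proper arc-colouring of type I of $\overleftrightarrow{G}$, and $\chi'_{D_{1,2}}(\overleftrightarrow{G})$ is the least number of colours in a distinguishing proper arc-colouring of type I. *)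

theory Defs
  imports Main
begin

text \<open>A simple graph is given by a vertex set V and a symmetric, irreflexive
adjacency relation E. The symmetric digraph has arc (u,v) iff E u v
(so every edge uv yields both arcs uv and vu).\<close>

definition arc_colouring_with :: "'a set \<Rightarrow> ('a \<Rightarrow> 'a \<Rightarrow> bool) \<Rightarrow> nat \<Rightarrow> ('a \<Rightarrow> 'a \<Rightarrow> nat) \<Rightarrow> bool" where
  "arc_colouring_with V E k c \<longleftrightarrow> (\<forall>u\<in>V. \<forall>v\<in>V. E u v \<longrightarrow> c u v < k)"

definition proper_typeI :: "'a set \<Rightarrow> ('a \<Rightarrow> 'a \<Rightarrow> bool) \<Rightarrow> ('a \<Rightarrow> 'a \<Rightarrow> 'c) \<Rightarrow> bool" where
  "proper_typeI V E c \<longleftrightarrow>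
     (\<forall>u\<in>V. \<forall>v\<in>V. \<forall>w\<in>V. E u v \<and> E v w \<longrightarrow> c u v \<noteq> c v w)"

definition digraph_aut :: "'a set \<Rightarrow> ('a \<Rightarrow> 'a \<Rightarrow> bool) \<Rightarrow> ('a \<Rightarrow> 'a) \<Rightarrow> bool" where
  "digraph_aut V E \<sigma> \<longleftrightarrow> bij_betw \<sigma> V V \<and> (\<forall>u\<in>V. \<forall>v\<in>V. E u v \<longleftrightarrow> E (\<sigma> u) (\<sigma> v))"

definition distinguishing :: "'a set \<Rightarrow> ('a \<Rightarrow> 'a \<Rightarrow> bool) \<Rightarrow> ('a \<Rightarrow> 'a \<Rightarrow> 'c) \<Rightarrow> bool" where
  "distinguishing V E c \<longleftrightarrow>
     (\<forall>\<sigma>. digraph_aut V E \<sigma> \<and> (\<forall>u\<in>V. \<forall>v\<in>V. E u v \<longrightarrow> c (\<sigma> u) (\<sigma> v) = c u v)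
          \<longrightarrow> (\<forall>v\<in>V. \<sigma> v = v))"

definition chi'_12 :: "'a set \<Rightarrow> ('a \<Rightarrow> 'a \<Rightarrow> bool) \<Rightarrow> nat" where
  "chi'_12 V E = (LEAST k. \<exists>c. arc_colouring_with V E k c \<and> proper_typeI V E c)"

definition chi'_D12 :: "'a set \<Rightarrow> ('a \<Rightarrow> 'a \<Rightarrow> bool) \<Rightarrow> nat" where
  "chi'_D12 V E = (LEAST k. \<exists>c. arc_colouring_with V E k c \<and> proper_typeI V E c
                                 \<and> distinguishing V E c)"

definition K_V :: "nat \<Rightarrow> nat set" where "K_V n = {0..<n}"
definition K_E :: "nat \<Rightarrow> nat \<Rightarrow> bool" where "K_E u v \<longleftrightarrow> u \<noteq> v"

end

theory Submission
  imports Defs Complex_Main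
begin

text \<open>If a colour-preserving automorphism \<sigma> moved a vertex v, then for the preimage x of v
the arcs (v, x) and (\<sigma> v, v) = (\<sigma> v, \<sigma> x) would be consecutive arcs of equal
colour. For the chromatic index, the sets of colours on the arcs leaving the vertices form an
antichain of subsets of the colour set, since the colour of the arc (u, v) leaves u but cannot
leave v; by Sperner's theorem there are at most binomial(k, \<lfloor>k/2\<rfloor>) of them.
Conversely, giving the vertices distinct \<lfloor>k/2\<rfloor>-subsets f v of the colours and
colouring (u, v) by an element of f u - f v yields a proper colouring. Sperner's theorem follows
from the LYM inequality, which is proved by induction on the ground set: deleting a point x from
the members of the antichain containing x gives an antichain on one point fewer, and summing the
resulting bounds over all x counts each member A exactly card A times.\<close>

definition antichain :: "'a set set \<Rightarrow> bool" where
  "antichain F \<longleftrightarrow> (\<forall>A\<in>F. \<forall>B\<in>F. A \<subseteq> B \<longrightarrow> A = B)"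

lemma inj_on_Diff_singleton: "inj_on (\<lambda>A. A - {x}) {A. x \<in> A}"
  by (auto intro!: inj_onI dest: arg_cong[where f = "insert x"])

lemma antichain_Diff_singleton:
  assumes "antichain F"
  shows "antichain ((\<lambda>A. A - {x}) ` {A\<in>F. x \<in> A})"
  unfolding antichain_def
proof (intro ballI impI)
  fix A' B'
  assume "A' \<in> (\<lambda>A. A - {x}) ` {A\<in>F. x \<in> A}" "B' \<in> (\<lambda>A. A - {x}) ` {A\<in>F. x \<in> A}"
    and "A' \<subseteq> B'"
  then obtain A B where "A \<in> F" "x \<in> A" "A' = A - {x}" "B \<in> F" "x \<in> B" "B' = B - {x}"
    by blast
  with \<open>A' \<subseteq> B'\<close> have "A \<subseteq> B" by blast
  with assms \<open>A \<in> F\<close> \<open>B \<in> F\<close> show "A' = B'"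
    unfolding antichain_def \<open>A' = A - {x}\<close> \<open>B' = B - {x}\<close> by blast
qed

lemma inverse_binomial_Diff_singleton:
  assumes "finite S" "A \<subseteq> S" "x \<in> A"
  shows "1 / real (card (S - {x}) choose card (A - {x}))
         = real (card S) / (real (card A) * real (card S choose card A))"
proof -
  obtain m a where m: "card S = Suc m" and a: "card A = Suc a"
    using assms by (metis card_gt_0_iff empty_iff finite_subset gr0_implies_Suc subset_empty)
  have "a \<le> m"
    using card_mono[OF assms(1,2)] m a by simp
  then have pos: "real (m choose a) > 0"
    by simp
  have "real (Suc m) * real (m choose a) = real (Suc m choose Suc a) * real (Suc a)"
    by (simp only: Suc_times_binomial_eq flip: of_nat_mult)
  with pos have "1 / real (m choose a) = real (Suc m) / (real (Suc a) * real (Suc m choose Suc a))"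
    by (simp add: field_simps del: of_nat_Suc binomial_Suc_Suc)
  moreover have "card (S - {x}) = m" "card (A - {x}) = a"
    using assms m a finite_subset[OF assms(2,1)] by auto
  ultimately show ?thesis
    using m a by simp
qed

theorem lym_inequality:
  assumes "finite S" "F \<subseteq> Pow S" "antichain F"
  shows "(\<Sum>A\<in>F. 1 / real (card S choose card A)) \<le> 1"
  using assms
proof (induction "card S" arbitrary: S F)
  case 0
  then have "F \<subseteq> {{}}"
    by auto
  then show ?case
    by (cases "F = {}") (auto dest: subset_singletonD)
next
  case (Suc m)
  show ?case
  proof (cases "{} \<in> F")
    case True
    with Suc.prems(3) have "F = {{}}"
      unfolding antichain_def by fastforce
    then show ?thesis by simp
  next
    case False
    have finite_F: "finite F"
      using finite_subset[OF Suc.prems(2)] Suc.prems(1) by simp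
    define w where "w A = real (card S) / (real (card A) * real (card S choose card A))"
      for A :: "'a set"
    have link: "(\<Sum>A\<in>{A\<in>F. x \<in> A}. w A) \<le> 1" if "x \<in> S" for x
    proof -
      let ?F\<^sub>x = "(\<lambda>A. A - {x}) ` {A\<in>F. x \<in> A}"
      have inj: "inj_on (\<lambda>A. A - {x}) {A\<in>F. x \<in> A}"
        using inj_on_Diff_singleton by (rule inj_on_subset) blast
      have "(\<Sum>A\<in>{A\<in>F. x \<in> A}. w A)
            = (\<Sum>A\<in>{A\<in>F. x \<in> A}. 1 / real (card (S - {x}) choose card (A - {x})))"
        using Suc.prems(1,2)
        by (intro sum.cong refl, subst inverse_binomial_Diff_singleton) (auto simp: w_def)
      also have "\<dots> = (\<Sum>B\<in>?F\<^sub>x. 1 / real (card (S - {x}) choose card B))"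
        by (simp add: sum.reindex[OF inj])
      also have "\<dots> \<le> 1"
      proof (rule Suc.hyps(1))
        show "m = card (S - {x})" "finite (S - {x})"
          using Suc.hyps(2) Suc.prems(1) that by simp_all
        show "?F\<^sub>x \<subseteq> Pow (S - {x})"
          using Suc.prems(2) by auto
        show "antichain ?F\<^sub>x"
          using Suc.prems(3) by (rule antichain_Diff_singleton)
      qed
      finally show ?thesis .
    qed
    have weight: "real (card A) * w A = real (card S) * (1 / real (card S choose card A))"
      if "A \<in> F" for A
    proof -
      have "finite A" "A \<noteq> {}"
        using False that Suc.prems(1,2) by (auto intro: finite_subset)
      then show ?thesis
        by (simp add: w_def)
    qed
    have "real (card S) * (\<Sum>A\<in>F. 1 / real (card S choose card A))
          = (\<Sum>A\<in>F. real (card A) * w A)"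
      by (simp add: sum_distrib_left weight)
    also have "\<dots> = (\<Sum>x\<in>S. \<Sum>A\<in>{A\<in>F. x \<in> A}. w A)"
      using sum.swap_restrict[OF Suc.prems(1) finite_F, of "\<lambda>x A. w A" "\<lambda>x A. x \<in> A"]
        Suc.prems(2) by (auto intro!: sum.cong simp: Int_absorb1 Int_def[symmetric])
    also have "\<dots> \<le> real (card S)"
      using sum_mono[of S _ "\<lambda>_. 1", OF link] by simp
    finally show ?thesis
      using Suc.hyps(2) by (simp del: of_nat_Suc)
  qed
qed

theorem sperner:
  assumes "finite S" "F \<subseteq> Pow S" "antichain F"
  shows "card F \<le> card S choose (card S div 2)"
proof -
  let ?N = "card S choose (card S div 2)"
  have "real (card F) / real ?N = (\<Sum>A\<in>F. 1 / real ?N)"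
    by simp
  also have "\<dots> \<le> (\<Sum>A\<in>F. 1 / real (card S choose card A))"
  proof (rule sum_mono)
    fix A assume "A \<in> F"
    then have "card A \<le> card S"
      using assms(1,2) by (simp add: card_mono subset_iff)
    then show "1 / real ?N \<le> 1 / real (card S choose card A)"
      using binomial_maximum[of "card S" "card A"] by (simp add: frac_le)
  qed
  also have "\<dots> \<le> 1"
    using assms by (rule lym_inequality)
  finally show ?thesis
    by (simp add: divide_le_eq)
qed

lemma K_E_eq: "K_E = (\<noteq>)"
  by (simp add: fun_eq_iff K_E_def)

lemma proper_typeI_complete_imp_distinguishing:
  assumes "proper_typeI V (\<noteq>) c"
  shows "distinguishing V (\<noteq>) c"
  unfolding distinguishing_def
proof (intro allI impI ballI)
  fix \<sigma> v
  assume \<sigma>: "digraph_aut V (\<noteq>) \<sigma> \<and> (\<forall>u\<in>V. \<forall>w\<in>V. u \<noteq> w \<longrightarrow> c (\<sigma> u) (\<sigma> w) = c u w)"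
    and "v \<in> V"
  show "\<sigma> v = v"
  proof (rule ccontr)
    assume "\<sigma> v \<noteq> v"
    have "bij_betw \<sigma> V V"
      using \<sigma> unfolding digraph_aut_def by simp
    then obtain x where "x \<in> V" "\<sigma> x = v" "\<sigma> v \<in> V"
      using \<open>v \<in> V\<close> by (metis bij_betwE bij_betw_imp_surj_on imageE)
    with \<open>\<sigma> v \<noteq> v\<close> have "v \<noteq> x"
      by auto
    with \<sigma> \<open>v \<in> V\<close> \<open>x \<in> V\<close> have "c (\<sigma> v) v = c v x"
      using \<open>\<sigma> x = v\<close> by metis
    moreover have "c (\<sigma> v) v \<noteq> c v x"
      using assms \<open>\<sigma> v \<in> V\<close> \<open>v \<in> V\<close> \<open>x \<in> V\<close> \<open>\<sigma> v \<noteq> v\<close> \<open>v \<noteq> x\<close>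
      unfolding proper_typeI_def by blast
    ultimately show False
      by contradiction
  qed
qed

lemma proper_typeI_complete_imp_card_le:
  assumes "arc_colouring_with V (\<noteq>) k c" "proper_typeI V (\<noteq>) c"
  shows "card V \<le> k choose (k div 2)"
proof -
  define out where "out v = c v ` (V - {v})" for v
  have out_not_subset: "\<not> out u \<subseteq> out v" if "u \<in> V" "v \<in> V" "u \<noteq> v" for u v
  proof
    assume "out u \<subseteq> out v"
    moreover have "c u v \<in> out u"
      using that unfolding out_def by blast
    ultimately obtain w where "w \<in> V" "v \<noteq> w" "c u v = c v w"
      unfolding out_def by blast
    with assms(2) that show False
      unfolding proper_typeI_def by blast
  qed
  have "inj_on out V"
    using out_not_subset by (metis inj_onI order_refl)
  moreover have "card (out ` V) \<le> card {..<k} choose (card {..<k} div 2)"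
  proof (rule sperner)
    show "out ` V \<subseteq> Pow {..<k}"
      using assms(1) unfolding arc_colouring_with_def out_def by auto
    show "antichain (out ` V)"
      unfolding antichain_def using out_not_subset by blast
  qed simp
  ultimately show ?thesis
    by (simp add: card_image)
qed

lemma exists_proper_typeI_complete:
  assumes "finite V" "card V \<le> k choose (k div 2)"
  obtains c where "arc_colouring_with V (\<noteq>) k c" "proper_typeI V (\<noteq>) c"
proof -
  let ?T = "{A. A \<subseteq> {..<k} \<and> card A = k div 2}"
  have "card ?T = k choose (k div 2)"
    using n_subsets[of "{..<k}" "k div 2"] by simp
  then obtain f where f: "f ` V \<subseteq> ?T" "inj_on f V"
    using card_le_inj[OF assms(1), of ?T] assms(2) by auto
  define c where "c u v = (SOME i. i \<in> f u - f v)" for u v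
  have c: "c u v \<in> f u - f v" if "u \<in> V" "v \<in> V" "u \<noteq> v" for u v
  proof -
    have "f u \<noteq> f v"
      using f(2) that by (meson inj_onD)
    moreover have "f u \<in> ?T" "f v \<in> ?T"
      using f(1) that by auto
    then have "finite (f v)" "card (f u) = card (f v)"
      by (auto intro: finite_subset)
    ultimately have "\<not> f u \<subseteq> f v"
      using card_subset_eq by metis
    then obtain i where "i \<in> f u - f v"
      by blast
    then show ?thesis
      unfolding c_def by (rule someI)
  qed
  show ?thesis
  proof
    show "arc_colouring_with V (\<noteq>) k c"
      using c f(1) unfolding arc_colouring_with_def by blast
    show "proper_typeI V (\<noteq>) c"
      unfolding proper_typeI_def
    proof (intro ballI impI)
      fix u v w
      assume "u \<in> V" "v \<in> V" "w \<in> V" "u \<noteq> v \<and> v \<noteq> w"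
      then have "c u v \<notin> f v" "c v w \<in> f v"
        using c by auto
      then show "c u v \<noteq> c v w"
        by auto
    qed
  qed
qed

lemma chi'_D12_eq_chi'_12:
  assumes "\<forall>c :: 'a \<Rightarrow> 'a \<Rightarrow> nat. proper_typeI V E c \<longrightarrow> distinguishing V E c"
  shows "chi'_D12 V E = chi'_12 V E"
  unfolding chi'_D12_def chi'_12_def using assms by metis

lemma chi'_12_complete:
  assumes "finite V"
  shows "chi'_12 V (\<noteq>) = (LEAST k. card V \<le> k choose (k div 2))"
proof -
  have "(\<exists>c. arc_colouring_with V (\<noteq>) k c \<and> proper_typeI V (\<noteq>) c)
        \<longleftrightarrow> card V \<le> k choose (k div 2)" for k
    using proper_typeI_complete_imp_card_le exists_proper_typeI_complete[OF assms] by blast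
  then show ?thesis
    unfolding chi'_12_def by simp
qed

theorem proposition2p1:
  fixes n :: nat
  assumes "n \<ge> 1"
  shows "(\<forall>c :: nat \<Rightarrow> nat \<Rightarrow> 'c. proper_typeI (K_V n) K_E c \<longrightarrow> distinguishing (K_V n) K_E c)
         \<and> chi'_D12 (K_V n) K_E = chi'_12 (K_V n) K_E
         \<and> chi'_12 (K_V n) K_E = (LEAST k. n \<le> k choose (k div 2))"
proof (intro conjI)
  have proper_distinguishing: "proper_typeI (K_V n) K_E c \<Longrightarrow> distinguishing (K_V n) K_E c"
    for c
    unfolding K_E_eq by (rule proper_typeI_complete_imp_distinguishing)
  then show "\<forall>c :: nat \<Rightarrow> nat \<Rightarrow> 'c. proper_typeI (K_V n) K_E c \<longrightarrow> distinguishing (K_V n) K_E c"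
    by blast
  from proper_distinguishing show "chi'_D12 (K_V n) K_E = chi'_12 (K_V n) K_E"
    by (blast intro: chi'_D12_eq_chi'_12)
  show "chi'_12 (K_V n) K_E = (LEAST k. n \<le> k choose (k div 2))"
    using chi'_12_complete[of "K_V n"] by (simp add: K_E_eq K_V_def)
qed

end
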